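(* For every $n\ge 2$, $\mathrm{isat}(n,\mathcal{V}_2)=\mathrm{isat}(n,\Lambda_2)=n+1$.
   Context: $\mathcal{B}_n$ denotes the Boolean lattice $(2^{[n]},\subseteq)$. A family $\mathcal{F}\subseteq 2^{[n]}$ (ordered by inclusion) is induced-$\mathcal{P}$-saturated if it contains no induced copy of $\mathcal{P}$ (an injection $f$ with $u\le v\iff f(u)\subseteq f(v)$) but every family $\mathcal{F}'$ with $\mathcal{F}\subsetneq\mathcal{F}'\subseteq 2^{[n]}$ contains one. $\mathrm{isat}(n,\mathcal{P})$ is the minimum size of an induced-$\mathcal{P}$-saturated family in $\mathcal{B}_n$. $\mathcal{V}_2$ is the three-element poset with one minimal element below two incomparable maximal elements; $\Lambda_2$ is the three-element poset with one maximal element above two incomparable minimal elements. *)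

theory Defs
  imports Main
begin

definition has_induced_copy :: "'p set \<Rightarrow> ('p \<Rightarrow> 'p \<Rightarrow> bool) \<Rightarrow> nat set set \<Rightarrow> bool" where
  "has_induced_copy P le F \<longleftrightarrow>
     (\<exists>f. inj_on f P \<and> f ` P \<subseteq> F \<and> (\<forall>u\<in>P. \<forall>v\<in>P. le u v \<longleftrightarrow> f u \<subseteq> f v))"

text \<open>The Boolean lattice B_n is the power set of [n] = {1..n}.\<close>

definition induced_saturated :: "nat \<Rightarrow> 'p set \<Rightarrow> ('p \<Rightarrow> 'p \<Rightarrow> bool) \<Rightarrow> nat set set \<Rightarrow> bool" where
  "induced_saturated n P le F \<longleftrightarrow>
     F \<subseteq> Pow {1..n} \<and> \<not> has_induced_copy P le F \<and>
     (\<forall>F'. F \<subset> F' \<and> F' \<subseteq> Pow {1..n} \<longrightarrow> has_induced_copy P le F')"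

definition isat :: "nat \<Rightarrow> 'p set \<Rightarrow> ('p \<Rightarrow> 'p \<Rightarrow> bool) \<Rightarrow> nat" where
  "isat n P le = Inf (card ` {F. induced_saturated n P le F})"

text \<open>V_2: element 0 below the incomparable elements 1 and 2.\<close>
definition V2_le :: "nat \<Rightarrow> nat \<Rightarrow> bool" where
  "V2_le u v \<longleftrightarrow> u = v \<or> u = 0"

text \<open>Lambda_2: element 0 above the incomparable elements 1 and 2.\<close>
definition Lambda2_le :: "nat \<Rightarrow> nat \<Rightarrow> bool" where
  "Lambda2_le u v \<longleftrightarrow> u = v \<or> v = 0"

definition poset3 :: "nat set" where
  "poset3 = {0, 1, 2}"

end

theory Submission
  imports Defs
begin

text \<open>Complementation within [n] reverses inclusion and is an involution of \<open>\<B>\<^sub>n\<close>, so it maps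
  induced-\<open>\<V>\<^sub>2\<close>-saturated families bijectively onto induced-\<open>\<Lambda>\<^sub>2\<close>-saturated ones
  and the two saturation numbers agree.

  The chain \<open>{} \<subset> {1} \<subset> \<dots> \<subset> [n]\<close> is induced-\<open>\<Lambda>\<^sub>2\<close>-saturated: a new set X with
  largest element k lies strictly below \<open>{1..k}\<close>, and so does \<open>{1..k-1}\<close>, which is
  incomparable to X. Conversely, in an induced-\<open>\<Lambda>\<^sub>2\<close>-saturated family every nonempty
  \<open>S \<subseteq> [n]\<close> is split by two members whose difference meets S in exactly one point. A family
  with this property has more than n members: for S = [n] two members differ in a single point u,
  and deleting u and identifying these two members allows induction on n.\<close>

lemma induced_saturated_subset_Pow: "induced_saturated n P le G \<Longrightarrow> G \<subseteq> Pow {1..n}"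
  unfolding induced_saturated_def by (elim conjE)

lemma induced_saturated_finite: "induced_saturated n P le G \<Longrightarrow> finite G"
  using finite_subset[OF induced_saturated_subset_Pow] by blast

lemma complement_image_complement_image:
  "F \<subseteq> Pow A \<Longrightarrow> (\<lambda>X. A - X) ` (\<lambda>X. A - X) ` F = F"
  by (force simp: image_image double_diff)

lemma Diff_subset_Diff_iff: "X \<subseteq> A \<Longrightarrow> Y \<subseteq> A \<Longrightarrow> A - X \<subseteq> A - Y \<longleftrightarrow> Y \<subseteq> X"
  by blast

lemma has_induced_copy_complement_imageI:
  assumes "F \<subseteq> Pow A" and "has_induced_copy P le F"
  shows "has_induced_copy P (\<lambda>u v. le v u) ((\<lambda>X. A - X) ` F)"
proof -
  obtain f where f: "inj_on f P" "f ` P \<subseteq> F" "\<forall>u\<in>P. \<forall>v\<in>P. le u v \<longleftrightarrow> f u \<subseteq> f v"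
    using assms(2) unfolding has_induced_copy_def by blast
  have fA: "f u \<subseteq> A" if "u \<in> P" for u
    using f(2) assms(1) that by blast
  have reverse: "le v u \<longleftrightarrow> A - f u \<subseteq> A - f v" if "u \<in> P" "v \<in> P" for u v
    using f(3) that Diff_subset_Diff_iff[OF fA[OF that(1)] fA[OF that(2)]] by simp
  have "inj_on (\<lambda>u. A - f u) P"
  proof (rule inj_onI)
    fix u v assume "u \<in> P" "v \<in> P" "A - f u = A - f v"
    then have "f u = f v"
      using double_diff[OF fA order_refl] by metis
    with f(1) \<open>u \<in> P\<close> \<open>v \<in> P\<close> show "u = v"
      by (simp add: inj_on_eq_iff)
  qed
  with f(2) reverse show ?thesis
    unfolding has_induced_copy_def by blast
qed

lemma has_induced_copy_complement_image:
  assumes "F \<subseteq> Pow A"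
  shows "has_induced_copy P (\<lambda>u v. le v u) ((\<lambda>X. A - X) ` F) \<longleftrightarrow> has_induced_copy P le F"
  using has_induced_copy_complement_imageI[of "(\<lambda>X. A - X) ` F" A P "\<lambda>u v. le v u"]
    has_induced_copy_complement_imageI[OF assms]
  by (auto simp: complement_image_complement_image[OF assms])

lemma induced_saturated_complement_imageI:
  assumes sat: "induced_saturated n P le F"
  shows "induced_saturated n P (\<lambda>u v. le v u) ((\<lambda>X. {1..n} - X) ` F)"
  unfolding induced_saturated_def
proof (intro conjI allI impI)
  let ?c = "\<lambda>X. {1..n} - X"
  have F: "F \<subseteq> Pow {1..n}"
    using sat by (rule induced_saturated_subset_Pow)
  show "?c ` F \<subseteq> Pow {1..n}"
    by blast
  show "\<not> has_induced_copy P (\<lambda>u v. le v u) (?c ` F)"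
    using sat unfolding induced_saturated_def has_induced_copy_complement_image[OF F] by blast
  fix F' assume F': "?c ` F \<subset> F' \<and> F' \<subseteq> Pow {1..n}"
  then have cc: "?c ` ?c ` F' = F'"
    by (simp add: complement_image_complement_image)
  have "?c ` ?c ` F \<subseteq> ?c ` F'"
    using F' by (intro image_mono) blast
  moreover have "?c ` ?c ` F \<noteq> ?c ` F'"
  proof
    assume "?c ` ?c ` F = ?c ` F'"
    then have "?c ` ?c ` ?c ` F = F'"
      using cc by simp
    moreover have "?c ` ?c ` ?c ` F = ?c ` F"
      by (rule complement_image_complement_image) blast
    ultimately show False
      using F' by simp
  qed
  ultimately have "F \<subset> ?c ` F'"
    unfolding complement_image_complement_image[OF F] by (rule psubsetI)
  then have copy: "has_induced_copy P le (?c ` F')"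
    using sat unfolding induced_saturated_def by blast
  have "has_induced_copy P (\<lambda>u v. le v u) (?c ` ?c ` F')"
    by (rule has_induced_copy_complement_imageI[OF _ copy]) blast
  then show "has_induced_copy P (\<lambda>u v. le v u) F'"
    unfolding cc .
qed

lemma card_complement_image: "F \<subseteq> Pow A \<Longrightarrow> card ((\<lambda>X. A - X) ` F) = card F"
  by (rule card_image, rule inj_on_subset[of _ "Pow A"]) (auto intro!: inj_onI simp: double_diff)

lemma isat_converse: "isat n P (\<lambda>u v. le v u) = isat n P le"
proof -
  have card_sat_subset:
    "card ` {F. induced_saturated n P le F} \<subseteq> card ` {F. induced_saturated n P (\<lambda>u v. le v u) F}"
    for le :: "'a \<Rightarrow> 'a \<Rightarrow> bool"
  proof
    fix k assume "k \<in> card ` {F. induced_saturated n P le F}"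
    then obtain F where F: "induced_saturated n P le F" and k: "k = card F"
      by blast
    have "k = card ((\<lambda>X. {1..n} - X) ` F)"
      unfolding k by (rule card_complement_image[OF induced_saturated_subset_Pow[OF F], symmetric])
    with induced_saturated_complement_imageI[OF F]
    show "k \<in> card ` {F. induced_saturated n P (\<lambda>u v. le v u) F}"
      by blast
  qed
  show ?thesis
    unfolding isat_def
    using card_sat_subset[of "\<lambda>u v. le v u"] card_sat_subset[of le]
    by (rule arg_cong[where f = Inf, OF subset_antisym])
qed

lemma card_lt_card_if_unit_sym_diffs:
  assumes "finite U" "finite H" "H \<noteq> {}"
    and "\<And>S. S \<subseteq> U \<Longrightarrow> S \<noteq> {} \<Longrightarrow> \<exists>A\<in>H. \<exists>A'\<in>H. card (sym_diff A A' \<inter> S) = 1"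
  shows "card U < card H"
  using assms
proof (induction "card U" arbitrary: U H)
  case 0
  have "0 < card H"
    using "0.prems"(2,3) by (simp add: card_gt_0_iff)
  with "0.hyps" show ?case
    by simp
next
  case (Suc m)
  have "U \<noteq> {}"
    using Suc.hyps(2) by auto
  then obtain A A' where A: "A \<in> H" "A' \<in> H" and "card (sym_diff A A' \<inter> U) = 1"
    using Suc.prems(4) by blast
  then obtain u where u: "sym_diff A A' \<inter> U = {u}"
    by (meson card_1_singletonE)
  then have "A \<noteq> A'" "u \<in> U"
    by auto
  define merge where "merge X = (if X = A' then A else X)" for X
  have merge_mem: "merge X \<in> H - {A'}" if "X \<in> H" for X
    using A \<open>A \<noteq> A'\<close> that unfolding merge_def by auto
  have "A \<inter> S = A' \<inter> S" if "S \<subseteq> U - {u}" for S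
  proof -
    have "sym_diff A A' \<inter> S = {}"
      using u that by blast
    then show ?thesis
      by blast
  qed
  then have merge_agrees: "merge X \<inter> S = X \<inter> S" if "S \<subseteq> U - {u}" for X S
    using that unfolding merge_def by simp
  have "card (U - {u}) < card (H - {A'})"
  proof (rule Suc.hyps)
    show "m = card (U - {u})"
      using Suc.hyps(2) Suc.prems(1) \<open>u \<in> U\<close> by simp
    show "finite (U - {u})" "finite (H - {A'})" "H - {A'} \<noteq> {}"
      using Suc.prems(1,2) merge_mem[OF A(1)] by auto
    fix S assume S: "S \<subseteq> U - {u}" "S \<noteq> {}"
    then obtain B B' where "B \<in> H" "B' \<in> H" "card (sym_diff B B' \<inter> S) = 1"
      using Suc.prems(4) by blast
    moreover have "sym_diff (merge B) (merge B') \<inter> S = sym_diff B B' \<inter> S"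
      using merge_agrees[OF S(1)] by blast
    ultimately show "\<exists>A\<in>H - {A'}. \<exists>A'\<in>H - {A'}. card (sym_diff A A' \<inter> S) = 1"
      using merge_mem by metis
  qed
  then show ?case
    using A(2) \<open>u \<in> U\<close> Suc.prems(1,2) by (simp add: card_Diff_singleton)
qed

definition Lambda2_free :: "'a set set \<Rightarrow> bool" where
  "Lambda2_free G \<longleftrightarrow> (\<forall>t\<in>G. \<forall>a\<in>G. \<forall>b\<in>G. a \<subset> t \<longrightarrow> b \<subset> t \<longrightarrow> a \<subseteq> b \<or> b \<subseteq> a)"

lemma Lambda2_free_subset: "Lambda2_free G \<Longrightarrow> H \<subseteq> G \<Longrightarrow> Lambda2_free H"
  unfolding Lambda2_free_def by blast

lemma not_Lambda2_freeI:
  "t \<in> G \<Longrightarrow> a \<in> G \<Longrightarrow> b \<in> G \<Longrightarrow> a \<subset> t \<Longrightarrow> b \<subset> t \<Longrightarrow> \<not> a \<subseteq> b \<Longrightarrow> \<not> b \<subseteq> a \<Longrightarrow>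
    \<not> Lambda2_free G"
  unfolding Lambda2_free_def by blast

lemma has_induced_copy_Lambda2_iff:
  "has_induced_copy poset3 Lambda2_le F \<longleftrightarrow> \<not> Lambda2_free F"
proof
  assume "has_induced_copy poset3 Lambda2_le F"
  then obtain f where f: "inj_on f poset3" "f ` poset3 \<subseteq> F"
    "\<forall>u\<in>poset3. \<forall>v\<in>poset3. Lambda2_le u v \<longleftrightarrow> f u \<subseteq> f v"
    unfolding has_induced_copy_def by blast
  then have "f 1 \<subset> f 0" "f 2 \<subset> f 0" "\<not> f 1 \<subseteq> f 2" "\<not> f 2 \<subseteq> f 1" "f ` {0, 1, 2} \<subseteq> F"
    unfolding poset3_def Lambda2_le_def inj_on_def by auto
  then show "\<not> Lambda2_free F"
    unfolding Lambda2_free_def by blast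
next
  assume "\<not> Lambda2_free F"
  then obtain t a b where "t \<in> F" "a \<in> F" "b \<in> F" "a \<subset> t" "b \<subset> t" "\<not> a \<subseteq> b" "\<not> b \<subseteq> a"
    unfolding Lambda2_free_def by blast
  then show "has_induced_copy poset3 Lambda2_le F"
    unfolding has_induced_copy_def poset3_def Lambda2_le_def inj_on_def
    by (intro exI[of _ "\<lambda>k. if k = 0 then t else if k = 1 then a else b"]) auto
qed

lemma induced_saturated_Lambda2_iff:
  "induced_saturated n poset3 Lambda2_le G \<longleftrightarrow>
     G \<subseteq> Pow {1..n} \<and> Lambda2_free G \<and>
     (\<forall>X\<in>Pow {1..n} - G. \<not> Lambda2_free (insert X G))"
proof -
  have "(\<forall>F'. G \<subset> F' \<and> F' \<subseteq> Pow {1..n} \<longrightarrow> \<not> Lambda2_free F') \<longleftrightarrow>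
      (\<forall>X\<in>Pow {1..n} - G. \<not> Lambda2_free (insert X G))" if G: "G \<subseteq> Pow {1..n}"
  proof
    assume supersets: "\<forall>F'. G \<subset> F' \<and> F' \<subseteq> Pow {1..n} \<longrightarrow> \<not> Lambda2_free F'"
    show "\<forall>X\<in>Pow {1..n} - G. \<not> Lambda2_free (insert X G)"
    proof
      fix X assume "X \<in> Pow {1..n} - G"
      then have "G \<subset> insert X G \<and> insert X G \<subseteq> Pow {1..n}"
        using G by auto
      with supersets show "\<not> Lambda2_free (insert X G)"
        by blast
    qed
  next
    assume insert: "\<forall>X\<in>Pow {1..n} - G. \<not> Lambda2_free (insert X G)"
    show "\<forall>F'. G \<subset> F' \<and> F' \<subseteq> Pow {1..n} \<longrightarrow> \<not> Lambda2_free F'"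
    proof (intro allI impI)
      fix F' assume F': "G \<subset> F' \<and> F' \<subseteq> Pow {1..n}"
      then obtain X where "X \<in> Pow {1..n} - G" "insert X G \<subseteq> F'"
        by blast
      then show "\<not> Lambda2_free F'"
        using insert Lambda2_free_subset by blast
    qed
  qed
  then show ?thesis
    unfolding induced_saturated_def has_induced_copy_Lambda2_iff by blast
qed

lemma Lambda2_free_insert_empty: "Lambda2_free G \<Longrightarrow> Lambda2_free (insert {} G)"
  unfolding Lambda2_free_def by blast

lemma Lambda2_free_insert_singleton:
  "Lambda2_free G \<Longrightarrow> \<forall>B\<in>G. i \<notin> B \<Longrightarrow> Lambda2_free (insert {i} G)"
  unfolding Lambda2_free_def by (auto simp: subset_singleton_iff)

lemma Lambda2_free_insert:
  assumes free: "Lambda2_free G" and "P \<in> G" "B \<in> G" "insert s P \<subset> B"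
    and above: "\<And>b t. b \<in> G \<Longrightarrow> t \<in> G \<Longrightarrow> P \<subset> b \<Longrightarrow> b \<subset> t \<Longrightarrow> s \<in> t \<Longrightarrow> s \<in> b"
  shows "Lambda2_free (insert (insert s P) G)"
proof -
  let ?X = "insert s P"
  have below_comparable: "a \<subseteq> b \<or> b \<subseteq> a"
    if "t \<in> G" "a \<in> G" "b \<in> G" "a \<subset> t" "b \<subset> t" for t a b
    using free that unfolding Lambda2_free_def by blast
  have X_comparable: "?X \<subseteq> b \<or> b \<subseteq> ?X"
    if "t \<in> G" "b \<in> G" "?X \<subset> t" "b \<subset> t" for t b
  proof -
    have "P \<subseteq> b \<or> b \<subseteq> P"
      using below_comparable[of t P b] \<open>P \<in> G\<close> that by blast
    moreover have "s \<in> b" if "P \<subset> b"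
      using above[of b t] \<open>P \<subset> b\<close> \<open>t \<in> G\<close> \<open>b \<in> G\<close> \<open>b \<subset> t\<close> \<open>?X \<subset> t\<close> by blast
    ultimately show ?thesis
      by blast
  qed
  show ?thesis
    unfolding Lambda2_free_def
  proof (intro ballI impI)
    fix t a b assume "t \<in> insert ?X G" "a \<in> insert ?X G" "b \<in> insert ?X G" "a \<subset> t" "b \<subset> t"
    then consider "t = ?X" "a \<in> G" "b \<in> G" | "t \<in> G" "a = ?X" "b \<in> G" | "t \<in> G" "a \<in> G" "b = ?X"
      | "t \<in> G" "a \<in> G" "b \<in> G" | "a = b"
      by blast
    then show "a \<subseteq> b \<or> b \<subseteq> a"
    proof cases
      case 1
      then show ?thesis
        using below_comparable[of B a b] \<open>B \<in> G\<close> \<open>?X \<subset> B\<close> \<open>a \<subset> t\<close> \<open>b \<subset> t\<close> by blast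
    next
      case 2
      then show ?thesis
        using X_comparable[of t b] \<open>a \<subset> t\<close> \<open>b \<subset> t\<close> by blast
    next
      case 3
      then show ?thesis
        using X_comparable[of t a] \<open>a \<subset> t\<close> \<open>b \<subset> t\<close> by blast
    qed (use below_comparable \<open>a \<subset> t\<close> \<open>b \<subset> t\<close> in blast)+
  qed
qed

lemma Lambda2_saturated_free: "induced_saturated n poset3 Lambda2_le G \<Longrightarrow> Lambda2_free G"
  unfolding induced_saturated_Lambda2_iff by (elim conjE)

lemma Lambda2_saturated_memI:
  assumes "induced_saturated n poset3 Lambda2_le G" "X \<subseteq> {1..n}" "Lambda2_free (insert X G)"
  shows "X \<in> G"
  using assms unfolding induced_saturated_Lambda2_iff by blast

lemma Lambda2_saturated_empty_mem:
  assumes "induced_saturated n poset3 Lambda2_le G"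
  shows "{} \<in> G"
  using Lambda2_saturated_memI[OF assms] Lambda2_free_insert_empty[OF Lambda2_saturated_free[OF assms]]
  by blast

lemma Lambda2_saturated_covers:
  assumes "induced_saturated n poset3 Lambda2_le G" "i \<in> {1..n}"
  shows "\<exists>B\<in>G. i \<in> B"
proof (rule ccontr)
  assume "\<not> (\<exists>B\<in>G. i \<in> B)"
  then have "Lambda2_free (insert {i} G)"
    using Lambda2_free_insert_singleton[OF Lambda2_saturated_free[OF assms(1)]] by blast
  then have "{i} \<in> G"
    using Lambda2_saturated_memI[OF assms(1)] assms(2) by blast
  with \<open>\<not> (\<exists>B\<in>G. i \<in> B)\<close> show False
    by blast
qed

text \<open>Choose P maximal among the members of G lying strictly below a member that contains a point
  of S outside P, and B minimal among such members above P. If B contained two points of S outside P,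
  adding P plus one of them would keep the family \<open>\<Lambda>\<^sub>2\<close>-free (by the maximality of P), so
  saturation would put this set into G strictly between P and B.\<close>

lemma Lambda2_saturated_unit_sym_diff:
  assumes sat: "induced_saturated n poset3 Lambda2_le G" and S: "S \<subseteq> {1..n}" "S \<noteq> {}"
  shows "\<exists>A\<in>G. \<exists>A'\<in>G. card (sym_diff A A' \<inter> S) = 1"
proof -
  have fin: "finite G"
    using sat by (rule induced_saturated_finite)
  define Q where "Q = {P \<in> G. \<exists>B\<in>G. P \<subset> B \<and> S \<inter> (B - P) \<noteq> {}}"
  obtain i where "i \<in> S"
    using S by blast
  then obtain B where "B \<in> G" "i \<in> B"
    using Lambda2_saturated_covers[OF sat] S by blast
  then have "{} \<in> Q"
    unfolding Q_def using Lambda2_saturated_empty_mem[OF sat] \<open>i \<in> S\<close> by blast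
  moreover have "finite Q"
    unfolding Q_def using fin by simp
  ultimately obtain P where "P \<in> Q" and P_max: "\<And>P'. P' \<in> Q \<Longrightarrow> P \<subseteq> P' \<Longrightarrow> P = P'"
    using finite_has_maximal[of Q] by blast
  have "P \<in> G"
    using \<open>P \<in> Q\<close> unfolding Q_def by blast
  define R where "R = {B \<in> G. P \<subset> B \<and> S \<inter> (B - P) \<noteq> {}}"
  have "R \<noteq> {}"
    using \<open>P \<in> Q\<close> unfolding Q_def R_def by blast
  moreover have "finite R"
    unfolding R_def using fin by simp
  ultimately obtain B where "B \<in> R" and B_min: "\<And>B'. B' \<in> R \<Longrightarrow> B' \<subseteq> B \<Longrightarrow> B = B'"
    using finite_has_minimal[of R] by blast
  have B: "B \<in> G" "P \<subset> B" "S \<inter> (B - P) \<noteq> {}"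
    using \<open>B \<in> R\<close> unfolding R_def by auto
  have "card (S \<inter> (B - P)) = 1"
  proof (rule ccontr)
    assume "card (S \<inter> (B - P)) \<noteq> 1"
    moreover obtain s where s: "s \<in> S \<inter> (B - P)"
      using B(3) by blast
    ultimately have "S \<inter> (B - P) \<noteq> {s}"
      by auto
    with s B(2) have "insert s P \<subset> B"
      by blast
    moreover have "s \<in> b" if "b \<in> G" "t \<in> G" "P \<subset> b" "b \<subset> t" "s \<in> t" for b t
      using P_max[of b] that s unfolding Q_def by blast
    ultimately have "Lambda2_free (insert (insert s P) G)"
      using Lambda2_free_insert[OF Lambda2_saturated_free[OF sat] \<open>P \<in> G\<close> B(1)] by blast
    moreover have "insert s P \<subseteq> {1..n}"
      using \<open>insert s P \<subset> B\<close> B(1) induced_saturated_subset_Pow[OF sat] by blast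
    ultimately have "insert s P \<in> R"
      using Lambda2_saturated_memI[OF sat] s unfolding R_def by blast
    then show False
      using B_min \<open>insert s P \<subset> B\<close> by blast
  qed
  moreover have "sym_diff P B \<inter> S = S \<inter> (B - P)"
    using B(2) by blast
  ultimately show ?thesis
    using \<open>P \<in> G\<close> B(1) by metis
qed

lemma Lambda2_saturated_card_gt:
  assumes "induced_saturated n poset3 Lambda2_le G"
  shows "n < card G"
  using card_lt_card_if_unit_sym_diffs[of "{1..n}" G] Lambda2_saturated_unit_sym_diff[OF assms]
    induced_saturated_finite[OF assms] Lambda2_saturated_empty_mem[OF assms]
  by auto

definition initial_segments :: "nat \<Rightarrow> nat set set" where
  "initial_segments n = (\<lambda>k. {1..k}) ` {..n}"

lemma card_initial_segments: "card (initial_segments n) = n + 1"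
proof -
  have "inj_on (\<lambda>k. {1..k::nat}) {..n}"
    by (rule inj_onI) (metis card_atLeastAtMost diff_Suc_1)
  then show ?thesis
    unfolding initial_segments_def by (simp add: card_image)
qed

lemma induced_saturated_initial_segments:
  "induced_saturated n poset3 Lambda2_le (initial_segments n)"
  unfolding induced_saturated_Lambda2_iff
proof (intro conjI ballI)
  show "initial_segments n \<subseteq> Pow {1..n}" "Lambda2_free (initial_segments n)"
    unfolding initial_segments_def Lambda2_free_def by (auto simp: le_cases)
  fix X assume X: "X \<in> Pow {1..n} - initial_segments n"
  have "{1..k} \<in> initial_segments n" if "k \<le> n" for k
    using that unfolding initial_segments_def by blast
  then have "X \<noteq> {}"
    using X by force
  have "finite X"
    using X finite_subset[of X "{1..n}"] by blast
  define k where "k = Max X"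
  have "k \<in> X" "X \<subseteq> {1..k}"
    using X \<open>finite X\<close> \<open>X \<noteq> {}\<close> unfolding k_def by auto
  then have "1 \<le> k" "k \<le> n"
    using X by auto
  have "X \<noteq> {1..k}"
    using X \<open>k \<le> n\<close> \<open>\<And>k. k \<le> n \<Longrightarrow> {1..k} \<in> initial_segments n\<close> by blast
  then have "X \<subset> {1..k}"
    using \<open>X \<subseteq> {1..k}\<close> by blast
  have "{1..k} = insert k {1..k-1}" "k \<notin> {1..k-1}"
    using \<open>1 \<le> k\<close> by auto
  then have "{1..k-1} \<subset> {1..k}" "\<not> X \<subseteq> {1..k-1}" "\<not> {1..k-1} \<subseteq> X"
    using \<open>k \<in> X\<close> \<open>X \<subset> {1..k}\<close> by auto
  moreover have "{1..k} \<in> initial_segments n" "{1..k-1} \<in> initial_segments n"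
    using \<open>k \<le> n\<close> \<open>\<And>k. k \<le> n \<Longrightarrow> {1..k} \<in> initial_segments n\<close> by auto
  ultimately show "\<not> Lambda2_free (insert X (initial_segments n))"
    using \<open>X \<subset> {1..k}\<close> by (intro not_Lambda2_freeI[of "{1..k}" _ X "{1..k-1}"]) auto
qed

lemma isat_Lambda2: "isat n poset3 Lambda2_le = n + 1"
  unfolding isat_def
proof (rule cInf_eq_minimum)
  show "n + 1 \<in> card ` {F. induced_saturated n poset3 Lambda2_le F}"
    using induced_saturated_initial_segments card_initial_segments by (metis image_eqI mem_Collect_eq)
  show "n + 1 \<le> k" if "k \<in> card ` {F. induced_saturated n poset3 Lambda2_le F}" for k
    using that Lambda2_saturated_card_gt by fastforce
qed

theorem theorem1p4:
  fixes n :: nat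
  assumes "n \<ge> 2"
  shows "isat n poset3 V2_le = n + 1 \<and> isat n poset3 Lambda2_le = n + 1"
proof -
  \<comment> \<open>The bound holds for every n.\<close>
  have "V2_le = (\<lambda>u v. Lambda2_le v u)"
    unfolding V2_le_def Lambda2_le_def by auto
  then have "isat n poset3 V2_le = isat n poset3 Lambda2_le"
    using isat_converse by metis
  with isat_Lambda2 show ?thesis
    by simp
qed

end
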